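(* For any voter matrix $V$, $r_V\ge \frac13$.
   Context: A voter matrix with $t$ topics is a matrix $V\in\{Y,N\}^{n\times t}$ for positive integers $n,t$ (rows are voters), subject to the standing assumption that in every column the number of entries $Y$ is at least the number of entries $N$. A proposal is a vector $p\in\{Y,N\}^t$. A voter $v$ supports $p$ if the Hamming distance between $v$ and $p$ is at most $t/2$; $p$ is supported by $V$ if at least $n/2$ rows of $V$ support $p$. For $i=1,\dots,t$ let $m_i$ be the fraction of entries $Y$ in column $i$ of $V$, and $m_V=\frac1t\sum_i m_i$. For a proposal $p$ let $m_i'=m_i$ if $p_i=Y$ and $m_i'=1-m_i$ if $p_i=N$; set $R_p=\frac1t\sum_i m_i'$ and $r_p=R_p/m_V$. $r_V$ is the maximum of $r_p$ over all proposals $p$ supported by $V$. *)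

theory Defs
  imports Main Complex_Main
begin

text \<open>Entries: True = Y, False = N. A voter matrix is a nonempty list of rows
  (voters, duplicates allowed), each row a list of length t (topics), t > 0.\<close>

definition voter_matrix :: "nat \<Rightarrow> bool list list \<Rightarrow> bool" where
  "voter_matrix t V \<longleftrightarrow> V \<noteq> [] \<and> 0 < t \<and> (\<forall>r\<in>set V. length r = t) \<and>
     (\<forall>i<t. length (filter (\<lambda>r. \<not> r ! i) V) \<le> length (filter (\<lambda>r. r ! i) V))"

definition hamming :: "bool list \<Rightarrow> bool list \<Rightarrow> nat" where
  "hamming v p = card {i. i < length p \<and> v ! i \<noteq> p ! i}"

definition supports :: "nat \<Rightarrow> bool list \<Rightarrow> bool list \<Rightarrow> bool" where
  "supports t v p \<longleftrightarrow> real (hamming v p) \<le> real t / 2"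

definition supported :: "nat \<Rightarrow> bool list list \<Rightarrow> bool list \<Rightarrow> bool" where
  "supported t V p \<longleftrightarrow> real (length (filter (\<lambda>v. supports t v p) V)) \<ge> real (length V) / 2"

definition mfrac :: "bool list list \<Rightarrow> nat \<Rightarrow> real" where
  "mfrac V i = real (length (filter (\<lambda>r. r ! i) V)) / real (length V)"

definition mV :: "nat \<Rightarrow> bool list list \<Rightarrow> real" where
  "mV t V = (\<Sum>i<t. mfrac V i) / real t"

definition Rp :: "nat \<Rightarrow> bool list list \<Rightarrow> bool list \<Rightarrow> real" where
  "Rp t V p = (\<Sum>i<t. if p ! i then mfrac V i else 1 - mfrac V i) / real t"

definition rp :: "nat \<Rightarrow> bool list list \<Rightarrow> bool list \<Rightarrow> real" where
  "rp t V p = Rp t V p / mV t V"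

definition rV :: "nat \<Rightarrow> bool list list \<Rightarrow> real" where
  "rV t V = Max {rp t V p | p. length p = t \<and> supported t V p}"

end

theory Submission
  imports Defs
begin

text \<open>A proposal and its complement are at Hamming distances summing to \<open>t\<close> from every voter,
  so one of the two is supported, and their values \<open>R\<^sub>p\<close> sum to 1. It therefore suffices to
  find a proposal \<open>q\<close> with \<open>m\<^sub>V/3 \<le> R\<^sub>q \<le> 1 - m\<^sub>V/3\<close>. Switching the entries of the
  all-\<open>Y\<close> proposal to \<open>N\<close> one topic at a time moves \<open>R\<close> from \<open>m\<^sub>V\<close> down to \<open>1 - m\<^sub>V\<close> in
  steps of at most \<open>1/t\<close>, while the target interval has length at least \<open>1/3\<close>; so for \<open>t \<ge> 3\<close>
  some intermediate proposal lands in it. For \<open>t \<le> 2\<close> the all-\<open>Y\<close> proposal is itself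
  supported, since every voter agreeing with the majority on the first topic supports it.\<close>

lemma length_filter_mono:
  assumes "\<And>x. x \<in> set xs \<Longrightarrow> P x \<Longrightarrow> Q x"
  shows "length (filter P xs) \<le> length (filter Q xs)"
  using assms by (induction xs) auto

lemma length_le_length_filter_add:
  assumes "\<And>x. x \<in> set xs \<Longrightarrow> P x \<or> Q x"
  shows "length xs \<le> length (filter P xs) + length (filter Q xs)"
  using assms by (induction xs) auto

lemma discrete_intermediate_value:
  fixes f :: "nat \<Rightarrow> real"
  assumes steps: "\<And>k. k < n \<Longrightarrow> f k - f (Suc k) \<le> c"
    and gap: "lo + c \<le> hi" and start: "lo \<le> f 0" and stop: "f n \<le> hi"
  shows "\<exists>k\<le>n. lo \<le> f k \<and> f k \<le> hi"
  using steps stop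
proof (induction n)
  case 0
  then show ?case using start by auto
next
  case (Suc n)
  show ?case
  proof (cases "lo \<le> f (Suc n)")
    case True
    then show ?thesis using Suc.prems(2) by blast
  next
    case False
    then have "f n \<le> hi" using Suc.prems(1)[of n] gap by simp
    moreover have "\<And>k. k < n \<Longrightarrow> f k - f (Suc k) \<le> c" using Suc.prems(1) by simp
    ultimately show ?thesis using Suc.IH le_SucI by blast
  qed
qed

lemma hamming_add_hamming_map_Not: "hamming v p + hamming v (map Not p) = length p"
proof -
  define D where "D = {i. i < length p \<and> v ! i \<noteq> p ! i}"
  have D: "D \<subseteq> {..<length p}" unfolding D_def by auto
  have "hamming v p = card D" unfolding hamming_def D_def ..
  moreover have "hamming v (map Not p) = card ({..<length p} - D)"
    unfolding hamming_def D_def by (intro arg_cong[where f = card]) auto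
  ultimately show ?thesis
    using card_Diff_subset[OF finite_subset[OF D] D] card_mono[OF _ D] by simp
qed

lemma supported_or_supported_map_Not:
  assumes "length p = t"
  shows "supported t V p \<or> supported t V (map Not p)"
proof -
  have "supports t v p \<or> supports t v (map Not p)" for v
  proof -
    have "real (hamming v p) + real (hamming v (map Not p)) = real t"
      using hamming_add_hamming_map_Not[of v p] assms by (metis of_nat_add)
    then show ?thesis unfolding supports_def by linarith
  qed
  then have "length V \<le> length (filter (\<lambda>v. supports t v p) V)
      + length (filter (\<lambda>v. supports t v (map Not p)) V)"
    by (intro length_le_length_filter_add)
  then show ?thesis unfolding supported_def by linarith
qed

lemma mfrac_le_1: "mfrac V i \<le> 1"
  unfolding mfrac_def by (simp add: divide_le_eq_1)

lemma mfrac_ge_half: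
  assumes "voter_matrix t V" and "i < t"
  shows "1 / 2 \<le> mfrac V i"
proof -
  have "length (filter (\<lambda>r. \<not> r ! i) V) \<le> length (filter (\<lambda>r. r ! i) V)" and "V \<noteq> []"
    using assms unfolding voter_matrix_def by auto
  moreover have "length (filter (\<lambda>r. r ! i) V) + length (filter (\<lambda>r. \<not> r ! i) V) = length V"
    by (rule sum_length_filter_compl)
  ultimately show ?thesis unfolding mfrac_def by (simp add: field_simps)
qed

lemma mV_bounds:
  assumes "voter_matrix t V"
  shows "1 / 2 \<le> mV t V" and "mV t V \<le> 1"
proof -
  have t: "0 < t" using assms unfolding voter_matrix_def by simp
  have "(\<Sum>i<t. 1 / 2) \<le> (\<Sum>i<t. mfrac V i)"
    by (intro sum_mono mfrac_ge_half[OF assms]) simp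
  then show "1 / 2 \<le> mV t V" unfolding mV_def using t by (simp add: field_simps)
  have "(\<Sum>i<t. mfrac V i) \<le> (\<Sum>i<t. 1)"
    by (intro sum_mono mfrac_le_1)
  then show "mV t V \<le> 1" unfolding mV_def using t by (simp add: field_simps)
qed

lemma Rp_map_Not:
  assumes "length p = t" and "0 < t"
  shows "Rp t V (map Not p) = 1 - Rp t V p"
proof -
  have "(\<Sum>i<t. if map Not p ! i then mfrac V i else 1 - mfrac V i)
      = (\<Sum>i<t. 1 - (if p ! i then mfrac V i else 1 - mfrac V i))"
    using assms(1) by (intro sum.cong) auto
  then show ?thesis unfolding Rp_def using assms(2) by (simp add: sum_subtractf field_simps)
qed

lemma rp_ge_third:
  assumes "voter_matrix t V" and "mV t V / 3 \<le> Rp t V p"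
  shows "1 / 3 \<le> rp t V p"
  using assms mV_bounds(1)[OF assms(1)] unfolding rp_def by (simp add: field_simps)

lemma rp_le_rV:
  assumes "length p = t" and "supported t V p"
  shows "rp t V p \<le> rV t V"
proof -
  have "{rp t V p | p. length p = t \<and> supported t V p} \<subseteq> rp t V ` {p. length p = t}"
    by blast
  then have "finite {rp t V p | p. length p = t \<and> supported t V p}"
    using finite_list_length finite_subset by blast
  moreover have "rp t V p \<in> {rp t V p | p. length p = t \<and> supported t V p}"
    using assms by blast
  ultimately show ?thesis unfolding rV_def by (rule Max_ge)
qed

definition threshold_proposal :: "nat \<Rightarrow> nat \<Rightarrow> bool list" where
  "threshold_proposal t k = map (\<lambda>i. k \<le> i) [0..<t]"

lemma Rp_threshold_proposal:
  assumes "k \<le> t"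
  shows "Rp t V (threshold_proposal t k) = mV t V - (\<Sum>i<k. 2 * mfrac V i - 1) / real t"
proof -
  have "(\<Sum>i<t. if threshold_proposal t k ! i then mfrac V i else 1 - mfrac V i)
      = (\<Sum>i<t. mfrac V i - (if i \<in> {..<k} then 2 * mfrac V i - 1 else 0))"
    unfolding threshold_proposal_def by (intro sum.cong) auto
  also have "\<dots> = (\<Sum>i<t. mfrac V i) - (\<Sum>i<t. if i \<in> {..<k} then 2 * mfrac V i - 1 else 0)"
    by (rule sum_subtractf)
  also have "(\<Sum>i<t. if i \<in> {..<k} then 2 * mfrac V i - 1 else 0)
      = (\<Sum>i\<in>{..<t} \<inter> {..<k}. 2 * mfrac V i - 1)"
    by (rule sum.inter_restrict[symmetric]) simp
  also have "{..<t} \<inter> {..<k} = {..<k}" using assms by auto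
  finally show ?thesis unfolding Rp_def mV_def by (simp add: diff_divide_distrib)
qed

lemma balanced_threshold_proposal:
  assumes "voter_matrix t V" and "3 \<le> t"
  shows "\<exists>k\<le>t. mV t V / 3 \<le> Rp t V (threshold_proposal t k)
    \<and> Rp t V (threshold_proposal t k) \<le> 1 - mV t V / 3"
proof (rule discrete_intermediate_value)
  let ?f = "\<lambda>k. Rp t V (threshold_proposal t k)"
  show "?f k - ?f (Suc k) \<le> 1 / real t" if "k < t" for k
  proof -
    have "?f k - ?f (Suc k) = (2 * mfrac V k - 1) / real t"
      using that by (simp add: Rp_threshold_proposal add_divide_distrib)
    then show ?thesis using mfrac_le_1[of V k] by (simp add: divide_right_mono)
  qed
  have "1 / real t \<le> 1 / 3" using assms(2) by (simp add: field_simps)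
  then show "mV t V / 3 + 1 / real t \<le> 1 - mV t V / 3"
    using mV_bounds(2)[OF assms(1)] by linarith
  show "mV t V / 3 \<le> ?f 0"
    using mV_bounds(1)[OF assms(1)] by (simp add: Rp_threshold_proposal)
  have "(\<Sum>i<t. 2 * mfrac V i - 1) / real t = 2 * mV t V - 1"
    using assms(2) unfolding mV_def by (simp add: sum_subtractf sum_distrib_left field_simps)
  then show "?f t \<le> 1 - mV t V / 3"
    using mV_bounds[OF assms(1)] by (simp add: Rp_threshold_proposal)
qed

lemma supported_replicate_True:
  assumes "voter_matrix t V" and "t \<le> 2"
  shows "supported t V (replicate t True)"
proof -
  have t: "0 < t" using assms(1) unfolding voter_matrix_def by simp
  have "supports t v (replicate t True)" if "v ! 0" for v
  proof -
    have "{i. i < length (replicate t True) \<and> v ! i \<noteq> replicate t True ! i} \<subseteq> {1..<t}"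
      using that by (auto simp: not_less_eq_eq)
    then have "hamming v (replicate t True) \<le> t - 1"
      unfolding hamming_def by (metis card_atLeastLessThan card_mono finite_atLeastLessThan)
    then show ?thesis unfolding supports_def using assms(2) t by linarith
  qed
  then have "length (filter (\<lambda>r. r ! 0) V)
      \<le> length (filter (\<lambda>v. supports t v (replicate t True)) V)"
    by (intro length_filter_mono)
  moreover have "real (length V) / 2 \<le> real (length (filter (\<lambda>r. r ! 0) V))"
  proof -
    have "V \<noteq> []" using assms(1) unfolding voter_matrix_def by simp
    then show ?thesis
      using mfrac_ge_half[OF assms(1) t] unfolding mfrac_def by (simp add: field_simps)
  qed
  ultimately show ?thesis unfolding supported_def by linarith
qed

lemma Rp_replicate_True: "Rp t V (replicate t True) = mV t V"
  unfolding Rp_def mV_def by (intro arg_cong[where f = "\<lambda>x. x / real t"] sum.cong) auto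

theorem lemma5p1:
  assumes "voter_matrix t V"
  shows "rV t V \<ge> 1 / 3"
proof -
  have t: "0 < t" using assms unfolding voter_matrix_def by simp
  obtain p where p: "length p = t" "supported t V p" "mV t V / 3 \<le> Rp t V p"
  proof (cases "t \<le> 2")
    case True
    show ?thesis
      using that[of "replicate t True"] supported_replicate_True[OF assms True]
        Rp_replicate_True mV_bounds(1)[OF assms] by simp
  next
    case False
    then obtain k where k: "mV t V / 3 \<le> Rp t V (threshold_proposal t k)"
        "Rp t V (threshold_proposal t k) \<le> 1 - mV t V / 3"
      using balanced_threshold_proposal[OF assms] by auto
    define q where "q = threshold_proposal t k"
    have q: "length q = t" by (simp add: q_def threshold_proposal_def)
    have "mV t V / 3 \<le> Rp t V (map Not q)"
      using k Rp_map_Not[OF q t] unfolding q_def by simp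
    moreover have "mV t V / 3 \<le> Rp t V q"
      using k unfolding q_def by simp
    ultimately show ?thesis
      using supported_or_supported_map_Not[OF q] that[of q] that[of "map Not q"] q
      by (metis length_map)
  qed
  then show ?thesis using rp_le_rV[OF p(1,2)] rp_ge_third[OF assms p(3)] by linarith
qed

end
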